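(* Let $\phi:\mathbb{R}\to\mathbb{R}$ be differentiable and let $f(z)=A\phi(Bz)$ with $A\in\mathbb{R}^{k_0\times k}$, $B\in\mathbb{R}^{k\times k_0}$, $z\in\mathbb{R}^{k_0}$. Let $x\in\mathbb{R}^{k_0}$ and run gradient descent with learning rate $\gamma>0$ on $\mathcal{L}(x,f)=\frac12\|x-f(x)\|_2^2$, i.e. $A^{(t+1)}=A^{(t)}+\gamma(x-A^{(t)}\phi(B^{(t)}x))\phi(B^{(t)}x)^T$, $B^{(t+1)}=B^{(t)}+\gamma\,\mathrm{diag}(\phi'(B^{(t)}x)){A^{(t)}}^T(x-A^{(t)}\phi(B^{(t)}x))x^T$. If $A^{(0)}=x{a^{(0)}}^T$ and $B^{(0)}=b^{(0)}x^T$ for some $a^{(0)},b^{(0)}\in\mathbb{R}^k$, then for all time steps $t$ there exist $a^{(t)},b^{(t)}\in\mathbb{R}^k$ with $A^{(t)}=x{a^{(t)}}^T$ and $B^{(t)}=b^{(t)}x^T$.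
   Context: $\phi$ and $\phi'$ are applied coordinatewise; $\mathrm{diag}(w)$ is the diagonal matrix with diagonal $w$. *)

theory Defs
  imports "HOL-Analysis.Analysis"
begin

definition outer :: "real^'m \<Rightarrow> real^'n \<Rightarrow> real^'n^'m" where
  "outer u v = (\<chi> i j. u $ i * v $ j)"

definition diagm :: "real^'n \<Rightarrow> real^'n^'n" where
  "diagm w = (\<chi> i j. if i = j then w $ i else 0)"

definition vmap :: "(real \<Rightarrow> real) \<Rightarrow> real^'n \<Rightarrow> real^'n" where
  "vmap g v = (\<chi> i. g (v $ i))"

end

theory Submission
  imports Defs
begin

(* If A = x a^T then the residual x - A v is a multiple of x, so the gradient step on A
   adds a matrix of the form x c^T; the step on B always adds a matrix of the form w x^T,
   its last factor being the input x. Hence both factorizations persist by induction, for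
   every activation and every learning rate. *)

lemma outer_mult_vec: "outer u a *v v = (a \<bullet> v) *\<^sub>R u"
  by (simp add: outer_def matrix_vector_mult_def vec_eq_iff inner_vec_def
      sum_distrib_left mult.commute mult.left_commute)

lemma scaleR_outer_left: "c *\<^sub>R outer u v = outer (c *\<^sub>R u) v"
  by (simp add: outer_def vec_eq_iff)

lemma scaleR_outer_right: "c *\<^sub>R outer u v = outer u (c *\<^sub>R v)"
  by (simp add: outer_def vec_eq_iff)

lemma outer_add_left: "outer u w + outer v w = outer (u + v) w"
  by (simp add: outer_def vec_eq_iff algebra_simps)

lemma outer_add_right: "outer u v + outer u w = outer u (v + w)"
  by (simp add: outer_def vec_eq_iff algebra_simps)

lemma residual_outer: "x - outer x a *v v = (1 - a \<bullet> v) *\<^sub>R x"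
  by (simp add: outer_mult_vec algebra_simps)

lemma outer_residual_update:
  "outer x a + \<gamma> *\<^sub>R outer (x - outer x a *v v) v = outer x (a + (\<gamma> * (1 - a \<bullet> v)) *\<^sub>R v)"
  by (simp add: residual_outer scaleR_outer_right outer_add_right flip: scaleR_outer_left)

lemma outer_update_left: "outer b x + \<gamma> *\<^sub>R outer w x = outer (b + \<gamma> *\<^sub>R w) x"
  by (simp add: scaleR_outer_left outer_add_left)

theorem mainTheorem5:
  fixes \<phi> \<phi>' :: "real \<Rightarrow> real"
    and x :: "real^'k0"
    and A :: "nat \<Rightarrow> real^'k^'k0"
    and B :: "nat \<Rightarrow> real^'k0^'k"
    and \<gamma> :: real
    and a0 b0 :: "real^'k"
  assumes deriv: "\<And>y. (\<phi> has_real_derivative \<phi>' y) (at y)"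
    and gamma_pos: "\<gamma> > 0"
    and A_step: "\<And>t. A (Suc t) = A t + \<gamma> *\<^sub>R
        outer (x - A t *v vmap \<phi> (B t *v x)) (vmap \<phi> (B t *v x))"
    and B_step: "\<And>t. B (Suc t) = B t + \<gamma> *\<^sub>R
        outer (diagm (vmap \<phi>' (B t *v x)) *v (transpose (A t) *v (x - A t *v vmap \<phi> (B t *v x)))) x"
    and A0: "A 0 = outer x a0"
    and B0: "B 0 = outer b0 x"
  shows "\<forall>t. \<exists>a b :: real^'k. A t = outer x a \<and> B t = outer b x"
proof
  fix t show "\<exists>a b :: real^'k. A t = outer x a \<and> B t = outer b x"
  proof (induction t)
    case 0
    then show ?case using A0 B0 by blast
  next
    case (Suc t)
    then obtain a b where A_t: "A t = outer x a" and B_t: "B t = outer b x"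
      by blast
    have "\<exists>c. A (Suc t) = outer x c"
      using A_step[of t] by (auto simp: A_t outer_residual_update)
    moreover have "\<exists>d. B (Suc t) = outer d x"
      using B_step[of t] by (auto simp: B_t outer_update_left)
    ultimately show ?case by blast
  qed
qed

end
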